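(* Let $X^+$ be a one-sided subshift whose natural extension $\tilde X$ is infinite and minimal. Then the eventually Markov part $\tilde X_M$ of $\tilde X$ is empty.
   Context: Let $\mathcal A$ be a finite alphabet and $\sigma$ the shift, $(\sigma x)_i=x_{i+1}$. A one-sided subshift is a nonempty closed $\sigma$-invariant $X^+\subseteq\mathcal A^{\mathbb N}$; its natural extension is $\tilde X=\{x\in\mathcal A^{\mathbb Z}: x_px_{p+1}\dots\in X^+ \text{ for all } p\in\mathbb Z\}$ with the shift. For a block $a_{-n}\dots a_0$ occurring in $\tilde X$, $\mathrm{fol}(a_{-n}\dots a_0)=\{b_0b_1\dots\in X^+:\exists b\in\tilde X \text{ with } b_{-n}\dots b_0=a_{-n}\dots a_0\}$. A point $a\in\tilde X$ is eventually Markov at time $p\in\mathbb Z$ if there is $N$ such that $\mathrm{fol}(a_{p-n}\dots a_p)=\mathrm{fol}(a_{p-N}\dots a_p)$ for all $n\ge N$. The eventually Markov part $\tilde X_M$ is the set of $a\in\tilde X$ that are eventually Markov at every time $p\in\mathbb Z$. A system is minimal if every orbit is dense. *)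

theory Defs
  imports Main
begin

text \<open>Alphabet: a finite type 'a. One-sided sequences: nat \<Rightarrow> 'a; two-sided: int \<Rightarrow> 'a.
  Topology: product of discrete topologies; closedness written out via finite prefixes.\<close>

definition seq_closed :: "(nat \<Rightarrow> 'a) set \<Rightarrow> bool" where
  "seq_closed X \<longleftrightarrow> (\<forall>x. (\<forall>n. \<exists>y\<in>X. \<forall>i<n. y i = x i) \<longrightarrow> x \<in> X)"

definition one_sided_subshift :: "(nat \<Rightarrow> 'a::finite) set \<Rightarrow> bool" where
  "one_sided_subshift X \<longleftrightarrow> X \<noteq> {} \<and> seq_closed X \<and> (\<forall>x\<in>X. (\<lambda>i. x (Suc i)) \<in> X)"

definition natural_extension :: "(nat \<Rightarrow> 'a) set \<Rightarrow> (int \<Rightarrow> 'a) set" where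
  "natural_extension X = {x. \<forall>p::int. (\<lambda>i::nat. x (p + int i)) \<in> X}"

text \<open>Minimality of the two-sided shift on Y: every orbit is dense (in the product topology).\<close>
definition minimal_two_sided :: "(int \<Rightarrow> 'a) set \<Rightarrow> bool" where
  "minimal_two_sided Y \<longleftrightarrow>
     (\<forall>x\<in>Y. \<forall>y\<in>Y. \<forall>n::nat. \<exists>k::int. \<forall>j::int. \<bar>j\<bar> \<le> int n \<longrightarrow> x (j + k) = y j)"

text \<open>fol of a block w = w_0 ... w_m, read as positions -m..0.\<close>
definition fol :: "(nat \<Rightarrow> 'a) set \<Rightarrow> 'a list \<Rightarrow> (nat \<Rightarrow> 'a) set" where
  "fol X w = {(\<lambda>i::nat. c (int i)) | c. c \<in> natural_extension X \<and>
      (\<forall>j<length w. c (int j - (int (length w) - 1)) = w ! j)}"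

definition block :: "(int \<Rightarrow> 'a) \<Rightarrow> int \<Rightarrow> nat \<Rightarrow> 'a list" where
  "block a p n = map (\<lambda>j. a (p - int n + int j)) [0..<Suc n]"

definition eventually_markov_at :: "(nat \<Rightarrow> 'a) set \<Rightarrow> (int \<Rightarrow> 'a) \<Rightarrow> int \<Rightarrow> bool" where
  "eventually_markov_at X a p \<longleftrightarrow>
     (\<exists>N. \<forall>n\<ge>N. fol X (block a p n) = fol X (block a p N))"

definition eventually_markov_part :: "(nat \<Rightarrow> 'a) set \<Rightarrow> (int \<Rightarrow> 'a) set" where
  "eventually_markov_part X = {a \<in> natural_extension X. \<forall>p. eventually_markov_at X a p}"

end

theory Submission
  imports Defs "HOL-Library.FuncSet" "HOL-Library.Infinite_Set"
begin

text \<open>Suppose \<open>a\<close> is eventually Markov at time 0 with memory \<open>N\<close>: the futures that may follow the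
  block \<open>a(-N) \<dots> a(0)\<close> are exactly those that may follow the whole past of \<open>a\<close>. By compactness and
  minimality this block recurs at some time \<open>t < 0\<close>. Hence the word \<open>a(t) \<dots> a(-1)\<close> may be put in
  front of any admissible future of the past of \<open>a\<close>, and the result is again admissible. Starting from
  the actual future of \<open>a\<close> and iterating, the natural extension contains arbitrarily long words of the
  periodic point with period word \<open>a(t) \<dots> a(-1)\<close>, hence that point itself. But a minimal system
  containing a periodic orbit consists of that orbit, so it is finite.\<close>

lemma all_less_Suc_reindex_int:
  "(\<forall>i<Suc n. P (int i - int n)) \<longleftrightarrow> (\<forall>j\<in>{-int n..0}. P j)"
proof
  assume P: "\<forall>i<Suc n. P (int i - int n)"
  show "\<forall>j\<in>{-int n..0}. P j"
  proof
    fix j assume "j \<in> {-int n..0}"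
    then have "nat (j + int n) < Suc n" and "int (nat (j + int n)) - int n = j" by auto
    then show "P j" using P by metis
  qed
qed auto

lemma length_block: "length (block a p n) = Suc n"
  by (simp add: block_def)

lemma block_nth: "i < Suc n \<Longrightarrow> block a p n ! i = a (p + (int i - int n))"
  by (simp add: block_def algebra_simps del: upt_Suc)

lemma block_eq_iff:
  "block a p n = block b q n \<longleftrightarrow> (\<forall>j\<in>{-int n..0}. a (p + j) = b (q + j))"
  unfolding all_less_Suc_reindex_int[symmetric]
  by (simp add: list_eq_iff_nth_eq length_block block_nth)

lemma fol_block_iff:
  "y \<in> fol X (block a p n) \<longleftrightarrow>
   (\<exists>c\<in>natural_extension X. (\<forall>j\<in>{-int n..0}. c j = a (p + j)) \<and> y = (\<lambda>i. c (int i)))"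
proof -
  have match: "(\<forall>i<length (block a p n). c (int i - (int (length (block a p n)) - 1)) = block a p n ! i)
      \<longleftrightarrow> (\<forall>j\<in>{-int n..0}. c j = a (p + j))" for c
    unfolding all_less_Suc_reindex_int[symmetric] by (simp add: length_block block_nth)
  show ?thesis
    unfolding fol_def match by blast
qed

lemma natural_extension_shift:
  assumes "x \<in> natural_extension X"
  shows "(\<lambda>j. x (j + c)) \<in> natural_extension X"
  unfolding natural_extension_def
proof (intro CollectI allI)
  fix p
  have "(\<lambda>i::nat. x (p + c + int i)) \<in> X"
    using assms unfolding natural_extension_def by blast
  then show "(\<lambda>i::nat. x (p + int i + c)) \<in> X"
    by (simp add: add.commute add.left_commute)
qed

lemma natural_extension_closed:
  assumes "seq_closed X"
    and approx: "\<And>n. \<exists>x\<in>natural_extension X. \<forall>j. \<bar>j\<bar> \<le> int n \<longrightarrow> x j = z j"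
  shows "z \<in> natural_extension X"
  unfolding natural_extension_def
proof (intro CollectI allI)
  fix p :: int
  have "\<exists>y\<in>X. \<forall>i<n. y i = z (p + int i)" for n
  proof -
    obtain x where x: "x \<in> natural_extension X" "\<forall>j. \<bar>j\<bar> \<le> \<bar>p\<bar> + int n \<longrightarrow> x j = z j"
      using approx[of "nat \<bar>p\<bar> + n"] by auto
    have "(\<lambda>i::nat. x (p + int i)) \<in> X"
      using x(1) unfolding natural_extension_def by blast
    moreover have "x (p + int i) = z (p + int i)" if "i < n" for i
      using x(2) that by simp
    ultimately show ?thesis by (intro bexI[of _ "\<lambda>i. x (p + int i)"]) auto
  qed
  then show "(\<lambda>i::nat. z (p + int i)) \<in> X"
    using assms(1)[unfolded seq_closed_def, rule_format, of "\<lambda>i. z (p + int i)"] by blast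
qed

lemma finite_alphabet_cluster_point:
  fixes f :: "nat \<Rightarrow> int \<Rightarrow> 'a::finite"
  shows "\<exists>b. \<forall>n m. \<exists>k\<ge>m. \<forall>j. \<bar>j\<bar> \<le> int n \<longrightarrow> b j = f k j"
proof -
  \<comment> \<open>A decreasing chain of infinite index sets \<open>K n\<close> on which all windows \<open>[-n, n]\<close> of \<open>f k\<close>
    agree; \<open>b j\<close> is read off from any index in \<open>K \<bar>j\<bar>\<close>.\<close>
  define w where "w n k = restrict (f k) {-int n..int n}" for n k
  have refine: "\<exists>K'. K' \<subseteq> K \<and> infinite K' \<and> (\<forall>k\<in>K'. \<forall>k'\<in>K'. w n k = w n k')"
    if K: "infinite K" for K :: "nat set" and n
  proof -
    have "finite (w n ` K)"
      by (rule finite_subset[of _ "\<Pi>\<^sub>E j\<in>{-int n..int n}. UNIV"]) (auto simp: w_def intro: finite_PiE)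
    then obtain k0 where "k0 \<in> K" "infinite {k\<in>K. w n k = w n k0}"
      using pigeonhole_infinite[OF K] by blast
    then show ?thesis by (intro exI[of _ "{k\<in>K. w n k = w n k0}"]) auto
  qed
  then obtain R where R: "\<And>K n. infinite K \<Longrightarrow>
      R K n \<subseteq> K \<and> infinite (R K n) \<and> (\<forall>k\<in>R K n. \<forall>k'\<in>R K n. w n k = w n k')"
    by metis
  define K where "K = rec_nat (R UNIV 0) (\<lambda>n Kn. R Kn (Suc n))"
  have K: "infinite (K n) \<and> (\<forall>k\<in>K n. \<forall>k'\<in>K n. w n k = w n k')" for n
    by (induction n) (use R in \<open>auto simp: K_def\<close>)
  have K_antimono: "K n \<subseteq> K m" if "m \<le> n" for m n
    by (rule lift_Suc_antimono_le[OF _ that]) (use R K in \<open>auto simp: K_def\<close>)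
  have "\<forall>n. \<exists>k. k \<in> K n"
    using K by (metis finite.emptyI ex_in_conv)
  then obtain kk where kk: "\<And>n. kk n \<in> K n"
    by metis
  define b where "b j = f (kk (nat \<bar>j\<bar>)) j" for j
  have "\<exists>k\<ge>m. \<forall>j. \<bar>j\<bar> \<le> int n \<longrightarrow> b j = f k j" for n m
  proof -
    obtain k where k: "k \<in> K n" "k \<ge> m"
      using K[of n] by (meson infinite_nat_iff_unbounded_le)
    have "b j = f k j" if j: "\<bar>j\<bar> \<le> int n" for j
    proof -
      have "k \<in> K (nat \<bar>j\<bar>)" using K_antimono[of "nat \<bar>j\<bar>" n] j k(1) by (auto simp: nat_le_iff)
      then have "w (nat \<bar>j\<bar>) (kk (nat \<bar>j\<bar>)) j = w (nat \<bar>j\<bar>) k j" using K kk by metis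
      then show ?thesis by (simp add: w_def b_def split: if_splits) linarith
    qed
    with k show ?thesis by blast
  qed
  then show ?thesis by blast
qed

text \<open>\<open>graft a p y\<close> is the past of \<open>a\<close> strictly before time \<open>p\<close> followed by \<open>y\<close> from time \<open>p\<close> on;
  \<open>fol_past X a p\<close> is the paper's follower set \<open>fol(\<dots> a(p-1) a(p))\<close> of the entire left ray.\<close>

definition graft :: "(int \<Rightarrow> 'a) \<Rightarrow> int \<Rightarrow> (nat \<Rightarrow> 'a) \<Rightarrow> int \<Rightarrow> 'a" where
  "graft a p y j = (if j < p then a j else y (nat (j - p)))"

definition fol_past :: "(nat \<Rightarrow> 'a) set \<Rightarrow> (int \<Rightarrow> 'a) \<Rightarrow> int \<Rightarrow> (nat \<Rightarrow> 'a) set" where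
  "fol_past X a p = {y. y 0 = a p \<and> graft a p y \<in> natural_extension X}"

lemma fol_past_subset_fol_block: "fol_past X a p \<subseteq> fol X (block a p n)"
proof
  fix y assume y: "y \<in> fol_past X a p"
  show "y \<in> fol X (block a p n)"
    unfolding fol_block_iff
  proof (intro bexI conjI)
    show "(\<lambda>j. graft a p y (j + p)) \<in> natural_extension X"
      using y natural_extension_shift unfolding fol_past_def by blast
    show "\<forall>j\<in>{-int n..0}. graft a p y (j + p) = a (p + j)"
      using y by (auto simp: fol_past_def graft_def add.commute)
    show "y = (\<lambda>i. graft a p y (int i + p))"
      by (simp add: graft_def)
  qed
qed

lemma fol_block_subset_fol_past:
  assumes "seq_closed X"
    and markov: "\<And>n. n \<ge> N \<Longrightarrow> fol X (block a p n) = fol X (block a p N)"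
  shows "fol X (block a p N) \<subseteq> fol_past X a p"
proof
  fix y assume y: "y \<in> fol X (block a p N)"
  have extends: "\<exists>c\<in>natural_extension X. (\<forall>j\<in>{-int n..0}. c j = a (p + j)) \<and> y = (\<lambda>i. c (int i))"
    if "n \<ge> N" for n
    using y markov[OF that] fol_block_iff[of y X a p n] by simp
  have "graft a p y \<in> natural_extension X"
  proof (rule natural_extension_closed[OF assms(1)])
    fix n
    obtain c where c: "c \<in> natural_extension X" "\<forall>j\<in>{-int (n + nat \<bar>p\<bar> + N)..0}. c j = a (p + j)"
      "y = (\<lambda>i. c (int i))"
      using extends[of "n + nat \<bar>p\<bar> + N"] by auto
    have "c (j - p) = graft a p y j" if "\<bar>j\<bar> \<le> int n" for j
      using c(2,3) that by (auto simp: graft_def)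
    then show "\<exists>x\<in>natural_extension X. \<forall>j. \<bar>j\<bar> \<le> int n \<longrightarrow> x j = graft a p y j"
      using natural_extension_shift[OF c(1), of "- p"] by (intro bexI[of _ "\<lambda>j. c (j + - p)"]) auto
  qed
  moreover have "y 0 = a p"
    using extends[of N] by auto
  ultimately show "y \<in> fol_past X a p"
    by (simp add: fol_past_def)
qed

lemma eventually_markov_at_fol_past:
  assumes "seq_closed X" "eventually_markov_at X a p"
  obtains N where "fol X (block a p N) = fol_past X a p"
proof -
  obtain N where "\<And>n. n \<ge> N \<Longrightarrow> fol X (block a p n) = fol X (block a p N)"
    using assms(2) unfolding eventually_markov_at_def by blast
  then have "fol X (block a p N) \<subseteq> fol_past X a p"
    by (rule fol_block_subset_fol_past[OF assms(1)])
  moreover have "fol_past X a p \<subseteq> fol X (block a p N)"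
    by (rule fol_past_subset_fol_block)
  ultimately show thesis
    by (rule that[OF subset_antisym])
qed

lemma minimal_block_recurs_in_past:
  fixes X :: "(nat \<Rightarrow> 'a::finite) set"
  assumes "seq_closed X"
    and minimal: "minimal_two_sided (natural_extension X)"
    and a: "a \<in> natural_extension X"
  obtains t where "t < 0" "block a t N = block a 0 N"
proof -
  \<comment> \<open>\<open>b\<close> is a limit of ever further backward shifts of \<open>a\<close>; the block occurs in \<open>b\<close> by
    minimality, hence in the far past of \<open>a\<close>.\<close>
  obtain b where b: "\<And>n m. \<exists>k\<ge>m. \<forall>j. \<bar>j\<bar> \<le> int n \<longrightarrow> b j = a (j - int k)"
    using finite_alphabet_cluster_point[of "\<lambda>k j. a (j - int k)"] by blast
  have b_ext: "b \<in> natural_extension X"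
  proof (rule natural_extension_closed[OF assms(1)])
    fix n
    obtain k where "\<forall>j. \<bar>j\<bar> \<le> int n \<longrightarrow> b j = a (j - int k)"
      using b by blast
    then show "\<exists>x\<in>natural_extension X. \<forall>j. \<bar>j\<bar> \<le> int n \<longrightarrow> x j = b j"
      using natural_extension_shift[OF a, of "- int k"] by (intro bexI[of _ "\<lambda>j. a (j + - int k)"]) auto
  qed
  obtain k where k: "\<forall>j. \<bar>j\<bar> \<le> int N \<longrightarrow> b (j + k) = a j"
    using minimal[unfolded minimal_two_sided_def, rule_format, OF b_ext a, of N] by blast
  obtain k' where k': "k' \<ge> nat \<bar>k\<bar> + 1" "\<forall>j. \<bar>j\<bar> \<le> int (nat \<bar>k\<bar> + N) \<longrightarrow> b j = a (j - int k')"
    using b by blast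
  have "a (k - int k' + j) = a j" if "j \<in> {-int N..0}" for j
  proof -
    have "b (j + k) = a (j + k - int k')"
      using k'(2) that by auto
    moreover have "b (j + k) = a j"
      using k that by auto
    ultimately show ?thesis by (simp add: algebra_simps)
  qed
  moreover have "k - int k' < 0"
    using k'(1) by linarith
  ultimately show thesis
    using that[of "k - int k'"] by (simp add: block_eq_iff)
qed

lemma funpow_prepend_eq_mod:
  assumes "i < m * L"
  shows "((\<lambda>y i. if i < L then w i else y (i - L)) ^^ m) y i = w (i mod L)"
  using assms
proof (induction m arbitrary: i)
  case (Suc m)
  show ?case
  proof (cases "i < L")
    case False
    then have "i - L < m * L" and "(i - L) mod L = i mod L"
      using Suc.prems by (auto simp: le_mod_geq)
    with False Suc.IH show ?thesis by simp
  qed simp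
qed simp

lemma periodic_add_mult:
  fixes z :: "int \<Rightarrow> 'a" and L :: int
  assumes "\<And>j. z (j + L) = z j"
  shows "z (j + L * q) = z j"
proof (induction q rule: int_induct[where k = 0])
  case (step1 i)
  then show ?case using assms[of "j + L * i"] by (simp add: algebra_simps)
next
  case (step2 i)
  then show ?case using assms[of "j + L * (i - 1)"] by (simp add: algebra_simps)
qed simp

lemma periodic_add_mod:
  fixes z :: "int \<Rightarrow> 'a" and L :: int
  assumes "\<And>j. z (j + L) = z j"
  shows "z (j + k) = z (j + k mod L)"
  using periodic_add_mult[of z L, OF assms, of "j + k mod L" "k div L"]
  by (simp add: algebra_simps)

lemma periodic_in_natural_extension:
  assumes "seq_closed X" "L > 0"
    and periodic: "\<And>j. z (j + int L) = z j"
    and windows: "\<And>m. \<exists>x\<in>natural_extension X. \<forall>i<m. x (int i) = z (int i)"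
  shows "z \<in> natural_extension X"
proof (rule natural_extension_closed[OF assms(1)])
  fix n
  obtain x where x: "x \<in> natural_extension X" "\<forall>i<n * L + n + 1. x (int i) = z (int i)"
    using windows by blast
  have "x (j + int (n * L)) = z j" if jn: "\<bar>j\<bar> \<le> int n" for j
  proof -
    have "n \<le> n * L"
      using \<open>L > 0\<close> by (cases L) auto
    then have "int n \<le> int (n * L)"
      by linarith
    then have "0 \<le> j + int (n * L)"
      using jn by linarith
    then obtain i where i: "int i = j + int (n * L)"
      using nonneg_int_cases by metis
    moreover have "i < n * L + n + 1"
      using i jn by linarith
    ultimately have "x (j + int (n * L)) = z (j + int L * int n)"
      using x(2) by (metis mult.commute of_nat_mult)
    then show ?thesis
      using periodic_add_mult[of z "int L", OF periodic] by simp
  qed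
  then show "\<exists>x\<in>natural_extension X. \<forall>j. \<bar>j\<bar> \<le> int n \<longrightarrow> x j = z j"
    using natural_extension_shift[OF x(1)] by (intro bexI[of _ "\<lambda>j. x (j + int (n * L))"]) auto
qed

lemma minimal_periodic_finite:
  assumes minimal: "minimal_two_sided (natural_extension X)"
    and z: "z \<in> natural_extension X" and "L > 0"
    and periodic: "\<And>j. z (j + L) = z j"
  shows "finite (natural_extension X)"
proof (rule finite_subset)
  show "natural_extension X \<subseteq> (\<lambda>r j. z (j + r)) ` {0..<L}"
  proof
    fix y assume y: "y \<in> natural_extension X"
    obtain k where k: "\<And>n j. \<bar>j\<bar> \<le> int n \<Longrightarrow> z (j + k n) = y j"
      using minimal[unfolded minimal_two_sided_def, rule_format, OF z y] by metis
    have "finite ((\<lambda>n. k n mod L) ` UNIV)"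
      by (rule finite_subset[of _ "{0..<L}"]) (use \<open>L > 0\<close> in auto)
    then obtain n0 where n0: "infinite {n. k n mod L = k n0 mod L}"
      using pigeonhole_infinite[OF infinite_UNIV_nat] by auto
    define r where "r = k n0 mod L"
    have "y j = z (j + r)" for j
    proof -
      obtain n where "n \<ge> nat \<bar>j\<bar>" "k n mod L = r"
        using n0 unfolding r_def infinite_nat_iff_unbounded_le by blast
      then show ?thesis
        using k[of j n] periodic_add_mod[of z L, OF periodic, of j "k n"] by simp
    qed
    moreover have "r \<in> {0..<L}"
      using \<open>L > 0\<close> by (simp add: r_def)
    ultimately show "y \<in> (\<lambda>r j. z (j + r)) ` {0..<L}"
      by (intro image_eqI[of _ _ r]) auto
  qed
qed simp

lemma graft_prepend:
  assumes "t < 0"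
  shows "graft a t (\<lambda>i. if i < nat (- t) then a (t + int i) else y (i - nat (- t))) = graft a 0 y"
    (is "graft a t ?y' = _")
proof
  fix j
  consider "j < t" | "t \<le> j" "j < 0" | "0 \<le> j"
    by linarith
  then show "graft a t ?y' j = graft a 0 y j"
  proof cases
    case 2
    then have "nat (j - t) < nat (- t)"
      by linarith
    with 2 show ?thesis
      by (simp add: graft_def)
  next
    case 3
    then have "\<not> nat (j - t) < nat (- t)" "nat (j - t) - nat (- t) = nat j"
      using assms by auto
    with 3 assms show ?thesis
      by (simp add: graft_def)
  qed (use assms in \<open>simp add: graft_def\<close>)
qed

lemma markov_past_recurrence_periodic_point:
  assumes "seq_closed X" and a: "a \<in> natural_extension X"
    and markov: "fol X (block a 0 N) = fol_past X a 0"
    and "t < 0" and recur: "block a t N = block a 0 N"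
  obtains z L where "z \<in> natural_extension X" "L > 0" "\<And>j. z (j + int L) = z j"
proof -
  define L where "L = nat (- t)"
  have L: "L > 0" "int L = - t"
    using \<open>t < 0\<close> by (auto simp: L_def)
  define prepend :: "(nat \<Rightarrow> 'a) \<Rightarrow> nat \<Rightarrow> 'a"
    where "prepend = (\<lambda>y i. if i < L then a (t + int i) else y (i - L))"
  have prepend_closed: "prepend y \<in> fol_past X a 0" if y: "y \<in> fol_past X a 0" for y
  proof -
    have "graft a t (prepend y) = graft a 0 y"
      using graft_prepend[OF \<open>t < 0\<close>, of a y] unfolding prepend_def L_def .
    moreover have "prepend y 0 = a t"
      using L(1) by (simp add: prepend_def)
    ultimately have "prepend y \<in> fol_past X a t"
      using y by (simp add: fol_past_def)
    also have "fol_past X a t \<subseteq> fol X (block a t N)"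
      by (rule fol_past_subset_fol_block)
    finally show ?thesis
      using recur markov by simp
  qed
  define a0 where "a0 = (\<lambda>i::nat. a (int i))"
  have "graft a 0 a0 = a"
    by (auto simp: graft_def a0_def)
  then have "a0 \<in> fol_past X a 0"
    using a by (simp add: fol_past_def a0_def)
  then have iterates: "(prepend ^^ m) a0 \<in> fol_past X a 0" for m
    by (induction m) (simp_all add: prepend_closed)
  define z where "z j = a (t + j mod int L)" for j
  have periodic: "z (j + int L) = z j" for j
    by (simp add: z_def)
  have "z \<in> natural_extension X"
  proof (rule periodic_in_natural_extension[of X L z, OF assms(1) L(1) periodic])
    fix m
    have "graft a 0 ((prepend ^^ m) a0) (int i) = z (int i)" if "i < m" for i
    proof -
      have "m \<le> m * L"
        using L(1) by (cases L) auto
      with that have "i < m * L"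
        by (rule less_le_trans)
      then have "(prepend ^^ m) a0 i = a (t + int (i mod L))"
        unfolding prepend_def by (rule funpow_prepend_eq_mod[where w = "\<lambda>i. a (t + int i)"])
      then show ?thesis
        by (simp add: graft_def z_def zmod_int)
    qed
    moreover have "graft a 0 ((prepend ^^ m) a0) \<in> natural_extension X"
      using iterates by (simp add: fol_past_def)
    ultimately show "\<exists>x\<in>natural_extension X. \<forall>i<m. x (int i) = z (int i)"
      by (intro bexI[of _ "graft a 0 ((prepend ^^ m) a0)"]) auto
  qed
  then show thesis
    using that L(1) periodic by blast
qed

theorem proposition5p13:
  fixes X :: "(nat \<Rightarrow> 'a::finite) set"
  assumes "one_sided_subshift X"
    and "infinite (natural_extension X)"
    and "minimal_two_sided (natural_extension X)"
  shows "eventually_markov_part X = {}"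
proof (rule equals0I)
  fix a assume "a \<in> eventually_markov_part X"
  then have a: "a \<in> natural_extension X" and "eventually_markov_at X a 0"
    unfolding eventually_markov_part_def by auto
  have closed: "seq_closed X"
    using assms(1) unfolding one_sided_subshift_def by blast
  obtain N where markov: "fol X (block a 0 N) = fol_past X a 0"
    using eventually_markov_at_fol_past[OF closed \<open>eventually_markov_at X a 0\<close>] by blast
  obtain t where "t < 0" "block a t N = block a 0 N"
    using minimal_block_recurs_in_past[OF closed assms(3) a] by blast
  then obtain z L where "z \<in> natural_extension X" "L > 0" "\<And>j. z (j + int L) = z j"
    using markov_past_recurrence_periodic_point[OF closed a markov] by blast
  then have "finite (natural_extension X)"
    using minimal_periodic_finite[OF assms(3), of z "int L"] by simp
  with assms(2) show False
    by simp
qed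

end
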